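(* Let $\Theta = \{\theta_1, \ldots, \theta_n\}$ be a set of positive rational numbers, and suppose $\Theta \subset [a_1; b_1] \cup \ldots \cup [a_m; b_m]$ with $0 < a_i \leq b_i$. Let $F$ be a non-zero function defined by \[ F(x) = \sum_{\theta \in \Theta} a_{\theta}\cos(2\pi \theta x) + b_{\theta}\sin(2\pi \theta x), \quad a_\theta, b_\theta \in \mathbb{R}. \] Then \[ \min(\rho_+(F), \rho_-(F)) \geq \frac{1}{1 + \frac{b_1}{a_1}} \cdots \frac{1}{1 + \frac{b_m}{a_m}}. \]
   Context: Such an $F$ is continuous and periodic. For a continuous periodic function $F\colon \mathbb{R} \to \mathbb{R}$ with period $P > 0$, $\rho_+(F) = \lambda(\{x \in [0,P] : F(x) > 0\})/P$ and $\rho_-(F) = \lambda(\{x \in [0,P] : F(x) < 0\})/P$, where $\lambda$ is Lebesgue measure on $\mathbb{R}$ (these do not depend on the choice of period). *)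

theory Defs
  imports "HOL-Analysis.Analysis"
begin

definition is_period :: "(real \<Rightarrow> real) \<Rightarrow> real \<Rightarrow> bool" where
  "is_period F P \<longleftrightarrow> P > 0 \<and> (\<forall>x. F (x + P) = F x)"

(* a (chosen) positive period; the densities below do not depend on the choice *)
definition some_period :: "(real \<Rightarrow> real) \<Rightarrow> real" where
  "some_period F = (SOME P. is_period F P)"

definition rho_plus :: "(real \<Rightarrow> real) \<Rightarrow> real" where
  "rho_plus F = measure lebesgue {x \<in> {0..some_period F}. F x > 0} / some_period F"

definition rho_minus :: "(real \<Rightarrow> real) \<Rightarrow> real" where
  "rho_minus F = measure lebesgue {x \<in> {0..some_period F}. F x < 0} / some_period F"

end

theory Submission
  imports Defs "HOL-Complex_Analysis.Complex_Analysis"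
begin

text \<open>
  Let \<open>D > 0\<close> make every \<open>u\<^sub>\<theta> = \<theta> D\<close> an integer, so that \<open>D\<close> is a period of \<open>F\<close>.
  For the \<open>i\<close>-th interval take \<open>d\<^sub>i = min u\<^sub>\<theta>\<close> and \<open>N\<^sub>i = min u\<^sub>\<theta> + max u\<^sub>\<theta>\<close> over the
  \<open>\<theta> \<in> [a\<^sub>i, b\<^sub>i]\<close>; then \<open>d\<^sub>i \<le> u\<^sub>\<theta> \<le> N\<^sub>i - d\<^sub>i\<close> and \<open>d\<^sub>i / N\<^sub>i \<ge> a\<^sub>i / (a\<^sub>i + b\<^sub>i)\<close>.
  Sample \<open>F\<close> at the points \<open>x + \<Sum>\<^sub>i n\<^sub>i D / N\<^sub>i\<close>, \<open>n \<in> \<Prod>\<^sub>i \<int>/N\<^sub>i\<close>. Every frequency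
  \<open>u\<^sub>\<theta> \<plusminus> r\<^sub>i\<close> with \<open>|r\<^sub>i| < d\<^sub>i\<close> is nonzero modulo \<open>N\<^sub>i\<close>, so the characters \<open>\<chi>\<^sub>k\<close>,
  \<open>k \<in> \<Prod>\<^sub>i [0, d\<^sub>i)\<close>, are orthogonal for the weight \<open>F\<close> on this grid. If fewer than
  \<open>\<Prod> d\<^sub>i\<close> grid points had \<open>F > 0\<close>, a nonzero combination \<open>p\<close> of the \<open>\<chi>\<^sub>k\<close> would vanish
  there, and \<open>\<Sum> F |p|\<^sup>2 = 0\<close> would force \<open>p = 0\<close> wherever \<open>F \<noteq> 0\<close>. Since \<open>F\<close> extends to an
  entire function, its zeros are countable and almost no grid meets them. Averaging the count
  over \<open>x\<close> in a period gives \<open>\<rho>\<^sub>+(F) \<ge> \<Prod> d\<^sub>i / N\<^sub>i\<close>; the same for \<open>-F\<close> bounds \<open>\<rho>\<^sub>-(F)\<close>.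
\<close>

section \<open>Sign counts of weights with orthogonal test functions\<close>

lemma homogeneous_system_back_substitution:
  fixes v :: "'k \<Rightarrow> 's \<Rightarrow> 'a::field"
  assumes "finite K" "k0 \<in> K" "v k0 s0 \<noteq> 0"
    and "\<forall>s\<in>S. (\<Sum>k\<in>K - {k0}. c k * (v k s - v k s0 / v k0 s0 * v k0 s)) = 0"
  shows "\<forall>s\<in>insert s0 S. (\<Sum>k\<in>K. (c(k0 := - (\<Sum>k\<in>K - {k0}. c k * v k s0) / v k0 s0)) k * v k s) = 0"
proof
  fix s assume s: "s \<in> insert s0 S"
  let ?c0 = "- (\<Sum>k\<in>K - {k0}. c k * v k s0) / v k0 s0"
  have "(\<Sum>k\<in>K. (c(k0 := ?c0)) k * v k s) = ?c0 * v k0 s + (\<Sum>k\<in>K - {k0}. c k * v k s)"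
    using assms(1,2) by (simp add: sum.remove)
  also have "\<dots> = 0"
  proof (cases "s = s0")
    case True
    then show ?thesis
      using assms(3) by simp
  next
    case False
    then have "(\<Sum>k\<in>K - {k0}. c k * v k s) - (\<Sum>k\<in>K - {k0}. c k * v k s0) / v k0 s0 * v k0 s = 0"
      using assms(4) s
      by (simp add: algebra_simps sum_subtractf sum_distrib_left sum_distrib_right sum_divide_distrib)
    then show ?thesis
      by (simp add: algebra_simps)
  qed
  finally show "(\<Sum>k\<in>K. (c(k0 := ?c0)) k * v k s) = 0" .
qed

lemma homogeneous_system_nontrivial_solution:
  fixes v :: "'k \<Rightarrow> 's \<Rightarrow> 'a::field"
  assumes "finite K" "finite S" "card S < card K"
  shows "\<exists>c. (\<exists>k\<in>K. c k \<noteq> 0) \<and> (\<forall>s\<in>S. (\<Sum>k\<in>K. c k * v k s) = 0)"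
  using assms(2,1,3)
proof (induction S arbitrary: K v rule: finite_induct)
  case empty
  then obtain k0 where "k0 \<in> K"
    by fastforce
  then show ?case
    by (intro exI[of _ "\<lambda>k. if k = k0 then 1 else 0"]) auto
next
  case (insert s0 S)
  show ?case
  proof (cases "\<forall>k\<in>K. v k s0 = 0")
    case True
    have "card S < card K"
      using insert.prems insert.hyps by simp
    then obtain c where "\<exists>k\<in>K. c k \<noteq> 0" "\<forall>s\<in>S. (\<Sum>k\<in>K. c k * v k s) = 0"
      using insert.IH[OF insert.prems(1)] by blast
    with True show ?thesis
      by auto
  next
    case False
    then obtain k0 where k0: "k0 \<in> K" "v k0 s0 \<noteq> 0"
      by blast
    have "finite (K - {k0})" "card S < card (K - {k0})"
      using insert k0 by auto
    \<comment> \<open>Eliminate the unknown \<open>c k0\<close> using the equation at \<open>s0\<close>.\<close>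
    then obtain c where c: "\<exists>k\<in>K - {k0}. c k \<noteq> 0"
      "\<forall>s\<in>S. (\<Sum>k\<in>K - {k0}. c k * (v k s - v k s0 / v k0 s0 * v k0 s)) = 0"
      using insert.IH[of "K - {k0}" "\<lambda>k s. v k s - v k s0 / v k0 s0 * v k0 s"] by blast
    then show ?thesis
      using homogeneous_system_back_substitution[of K k0 v s0 S c] insert.prems(1) k0
      by (intro exI[of _ "c(k0 := - (\<Sum>k\<in>K - {k0}. c k * v k s0) / v k0 s0)"]) auto
  qed
qed

lemma card_positive_ge_of_orthogonal:
  fixes g :: "'n \<Rightarrow> real" and E :: "'k \<Rightarrow> 'n \<Rightarrow> complex"
  assumes I: "finite I" and K: "finite K"
    and indep: "\<And>c. \<forall>n\<in>I. (\<Sum>k\<in>K. c k * E k n) = 0 \<Longrightarrow> \<forall>k\<in>K. c k = 0"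
    and orth: "\<And>k k'. k \<in> K \<Longrightarrow> k' \<in> K \<Longrightarrow> (\<Sum>n\<in>I. of_real (g n) * E k n * cnj (E k' n)) = 0"
    and nz: "\<And>n. n \<in> I \<Longrightarrow> g n \<noteq> 0"
  shows "card K \<le> card {n\<in>I. g n > 0}"
proof (rule ccontr)
  define S where "S = {n\<in>I. g n > 0}"
  assume "\<not> card K \<le> card {n\<in>I. g n > 0}"
  then have "card S < card K"
    by (simp add: S_def)
  moreover have "finite S"
    using I by (simp add: S_def)
  ultimately obtain c where c: "\<exists>k\<in>K. c k \<noteq> 0" "\<forall>s\<in>S. (\<Sum>k\<in>K. c k * E k s) = 0"
    using homogeneous_system_nontrivial_solution[OF K] by blast
  \<comment> \<open>\<open>p\<close> vanishes where \<open>g > 0\<close>, so \<open>\<Sum> -g |p|\<^sup>2\<close> is a sum of nonnegative terms;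
    orthogonality makes it zero.\<close>
  define p where "p n = (\<Sum>k\<in>K. c k * E k n)" for n
  have "(\<Sum>n\<in>I. of_real (g n) * p n * cnj (p n))
      = (\<Sum>n\<in>I. \<Sum>k\<in>K. \<Sum>k'\<in>K. c k * cnj (c k') * (of_real (g n) * E k n * cnj (E k' n)))"
    by (simp add: p_def sum_distrib_left sum_distrib_right mult_ac)
  also have "\<dots> = (\<Sum>k\<in>K. \<Sum>k'\<in>K. \<Sum>n\<in>I. c k * cnj (c k') * (of_real (g n) * E k n * cnj (E k' n)))"
    by (rule trans[OF sum.swap sum.cong[OF refl sum.swap]])
  also have "\<dots> = (\<Sum>k\<in>K. \<Sum>k'\<in>K. c k * cnj (c k') * (\<Sum>n\<in>I. of_real (g n) * E k n * cnj (E k' n)))"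
    by (simp add: sum_distrib_left)
  also have "\<dots> = 0"
    by (simp add: orth)
  finally have "(\<Sum>n\<in>I. of_real (g n) * p n * cnj (p n)) = 0" .
  moreover have "of_real (\<Sum>n\<in>I. - g n * (cmod (p n))\<^sup>2) = - (\<Sum>n\<in>I. of_real (g n) * p n * cnj (p n))"
    unfolding of_real_sum of_real_mult of_real_minus complex_norm_square by (simp add: mult.assoc sum_negf)
  ultimately have "(\<Sum>n\<in>I. - g n * (cmod (p n))\<^sup>2) = 0"
    by (metis minus_zero of_real_eq_0_iff)
  moreover have "- g n * (cmod (p n))\<^sup>2 \<ge> 0" if "n \<in> I" for n
    using c(2) that by (cases "g n > 0") (auto simp: S_def p_def mult_nonpos_nonneg)
  ultimately have "\<forall>n\<in>I. - g n * (cmod (p n))\<^sup>2 = 0"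
    by (simp add: sum_nonneg_eq_0_iff[OF I])
  then have "\<forall>n\<in>I. (\<Sum>k\<in>K. c k * E k n) = 0"
    using nz by (simp add: p_def)
  then show False
    using indep c(1) by blast
qed

section \<open>Characters of a finite product of cyclic groups\<close>

lemma sum_roots_of_unity_eq_0:
  fixes N :: nat and r :: int
  assumes "0 < N" "\<not> int N dvd r"
  shows "(\<Sum>n<N. cis (2 * pi * r * n / N)) = 0"
proof -
  define z where "z = cis (2 * pi * r / N)"
  have "cis (2 * pi * r * n / N) = z ^ n" for n
    unfolding z_def Complex.DeMoivre by (simp add: field_simps)
  moreover have "z ^ N = 1"
    using assms(1) by (simp add: z_def Complex.DeMoivre)
  moreover have "z \<noteq> 1"
  proof
    assume "z = 1"
    then have "exp (\<i> * complex_of_real (2 * pi * r / N)) = 1"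
      by (simp add: z_def cis_conv_exp)
    then obtain j :: int where "2 * pi * r / N = 2 * pi * j"
      by (auto simp: exp_eq_1)
    then have "real_of_int r = real N * j"
      using assms(1) by (simp add: field_simps)
    then have "r = int N * j"
      by (metis of_int_eq_iff of_int_mult of_int_of_nat_eq)
    with assms(2) show False
      by simp
  qed
  ultimately show ?thesis
    by (simp add: sum_gp_strict)
qed

definition residue_box :: "nat \<Rightarrow> (nat \<Rightarrow> nat) \<Rightarrow> (nat \<Rightarrow> nat) set" where
  "residue_box m N = (\<Pi>\<^sub>E i\<in>{..<m}. {..<N i})"

lemma finite_residue_box [simp]: "finite (residue_box m N)"
  by (simp add: residue_box_def finite_PiE)

lemma card_residue_box: "card (residue_box m N) = (\<Prod>i<m. N i)"
  by (simp add: residue_box_def card_PiE)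

definition torus_char :: "nat \<Rightarrow> (nat \<Rightarrow> nat) \<Rightarrow> (nat \<Rightarrow> int) \<Rightarrow> (nat \<Rightarrow> nat) \<Rightarrow> complex" where
  "torus_char m N k n = (\<Prod>i<m. cis (2 * pi * k i * n i / N i))"

lemma torus_char_add:
  "torus_char m N (\<lambda>i. k i + l i) n = torus_char m N k n * torus_char m N l n"
  unfolding torus_char_def prod.distrib[symmetric] cis_mult
  by (intro prod.cong refl) (simp add: field_simps add_divide_distrib)

lemma torus_char_mult_cnj:
  "torus_char m N k n * cnj (torus_char m N l n) = torus_char m N (\<lambda>i. k i - l i) n"
  unfolding torus_char_def cnj_prod prod.distrib[symmetric] cis_cnj cis_mult
  by (intro prod.cong refl) (simp add: field_simps diff_divide_distrib)

lemma torus_char_const: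
  "torus_char m N (\<lambda>i. c) n = cis (\<Sum>i<m. 2 * pi * c * n i / N i)"
proof -
  have "cis (\<Sum>i\<in>I. f i) = (\<Prod>i\<in>I. cis (f i))" for I and f :: "nat \<Rightarrow> real"
    by (induction I rule: infinite_finite_induct) (auto simp: cis_mult[symmetric])
  then show ?thesis
    by (simp add: torus_char_def)
qed

lemma sum_torus_char_eq_0:
  assumes "i < m" "0 < N i" "\<not> int (N i) dvd k i"
  shows "(\<Sum>n\<in>residue_box m N. torus_char m N k n) = 0"
proof -
  have "(\<Sum>n\<in>residue_box m N. torus_char m N k n) = (\<Prod>i<m. \<Sum>j<N i. cis (2 * pi * k i * j / N i))"
    unfolding torus_char_def residue_box_def
    using prod_sum_PiE[of "{..<m}" "\<lambda>i. {..<N i}" "\<lambda>i j. cis (2 * pi * k i * j / N i)"] by simp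
  also have "\<dots> = 0"
    using assms sum_roots_of_unity_eq_0 by (intro prod_zero) auto
  finally show ?thesis .
qed

lemma torus_char_orthogonal:
  assumes "\<forall>i<m. 0 < N i \<and> d i \<le> N i" "k \<in> residue_box m d" "l \<in> residue_box m d"
  shows "(\<Sum>n\<in>residue_box m N. torus_char m N (\<lambda>i. int (k i)) n * cnj (torus_char m N (\<lambda>i. int (l i)) n))
    = (if k = l then of_nat (\<Prod>i<m. N i) else 0)"
proof (cases "k = l")
  case True
  then show ?thesis
    unfolding True torus_char_mult_cnj by (simp add: torus_char_def card_residue_box)
next
  case False
  then obtain i where i: "i < m" "k i \<noteq> l i"
    using assms(2,3) by (metis PiE_ext lessThan_iff residue_box_def)
  have "\<not> int (N i) dvd int (k i) - int (l i)"
  proof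
    assume "int (N i) dvd int (k i) - int (l i)"
    then have "int (N i) \<le> \<bar>int (k i) - int (l i)\<bar>"
      using i(2) by (intro zdvd_imp_le) auto
    moreover have "k i < d i" "l i < d i" "d i \<le> N i"
      using assms i by (auto simp: residue_box_def)
    ultimately show False
      by linarith
  qed
  then show ?thesis
    using False assms(1) i(1) by (simp add: torus_char_mult_cnj sum_torus_char_eq_0)
qed

lemma torus_chars_independent:
  assumes dN: "\<forall>i<m. 0 < N i \<and> d i \<le> N i"
    and c: "\<forall>n\<in>residue_box m N. (\<Sum>k\<in>residue_box m d. c k * torus_char m N (\<lambda>i. int (k i)) n) = 0"
  shows "\<forall>k\<in>residue_box m d. c k = 0"
proof
  fix l assume l: "l \<in> residue_box m d"
  let ?\<chi> = "\<lambda>k n. torus_char m N (\<lambda>i. int (k i)) n"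
  have "0 = (\<Sum>n\<in>residue_box m N. (\<Sum>k\<in>residue_box m d. c k * ?\<chi> k n) * cnj (?\<chi> l n))"
    using c by simp
  also have "\<dots> = (\<Sum>k\<in>residue_box m d. c k * (\<Sum>n\<in>residue_box m N. ?\<chi> k n * cnj (?\<chi> l n)))"
    by (simp add: sum_distrib_left sum_distrib_right mult.assoc sum.swap[of _ "residue_box m N"])
  also have "\<dots> = (\<Sum>k\<in>residue_box m d. if k = l then c k * of_nat (\<Prod>i<m. N i) else 0)"
    by (intro sum.cong refl) (simp add: torus_char_orthogonal[OF dN _ l])
  also have "\<dots> = c l * of_nat (\<Prod>i<m. N i)"
    using l by simp
  finally show "c l = 0"
    using dN by auto
qed

section \<open>Trigonometric polynomials sampled on a grid\<close>

definition trig_poly :: "real set \<Rightarrow> (real \<Rightarrow> real) \<Rightarrow> (real \<Rightarrow> real) \<Rightarrow> real \<Rightarrow> real" where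
  "trig_poly \<Theta> A B x = (\<Sum>\<theta>\<in>\<Theta>. A \<theta> * cos (2 * pi * \<theta> * x) + B \<theta> * sin (2 * pi * \<theta> * x))"

lemma continuous_on_trig_poly: "continuous_on S (trig_poly \<Theta> A B)"
  unfolding trig_poly_def by (intro continuous_intros)

lemma uminus_trig_poly: "- trig_poly \<Theta> A B x = trig_poly \<Theta> (\<lambda>\<theta>. - A \<theta>) (\<lambda>\<theta>. - B \<theta>) x"
  by (simp add: trig_poly_def flip: sum_negf)

lemma trig_poly_periodic:
  assumes "\<forall>\<theta>\<in>\<Theta>. \<theta> * D \<in> \<int>"
  shows "trig_poly \<Theta> A B (x + D) = trig_poly \<Theta> A B x"
  unfolding trig_poly_def
proof (intro sum.cong refl)
  fix \<theta> assume "\<theta> \<in> \<Theta>"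
  then obtain j :: int where "\<theta> * D = j"
    using assms by (auto elim: Ints_cases)
  then have "2 * pi * \<theta> * (x + D) = 2 * pi * \<theta> * x + 2 * pi * j"
    by (simp add: algebra_simps flip: \<open>\<theta> * D = j\<close>)
  then show "A \<theta> * cos (2 * pi * \<theta> * (x + D)) + B \<theta> * sin (2 * pi * \<theta> * (x + D)) =
             A \<theta> * cos (2 * pi * \<theta> * x) + B \<theta> * sin (2 * pi * \<theta> * x)"
    by (simp add: cos_add sin_add)
qed

lemma countable_trig_poly_zeros:
  assumes "trig_poly \<Theta> A B x0 \<noteq> 0"
  shows "countable {x. trig_poly \<Theta> A B x = 0}"
proof -
  define G :: "complex \<Rightarrow> complex" where "G z = (\<Sum>\<theta>\<in>\<Theta>. of_real (A \<theta>) * cos (2 * pi * of_real \<theta> * z)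
      + of_real (B \<theta>) * sin (2 * pi * of_real \<theta> * z))" for z :: complex
  have G: "G (of_real x) = of_real (trig_poly \<Theta> A B x)" for x
    unfolding G_def trig_poly_def of_real_sum
    by (intro sum.cong refl) (simp flip: cos_of_real sin_of_real)
  have "countable {z. G z = 0}"
  proof (cases "G constant_on UNIV")
    case True
    then have "G z = of_real (trig_poly \<Theta> A B x0)" for z
      by (metis G UNIV_I constant_on_def)
    then show ?thesis
      using assms by simp
  next
    case False
    have "G holomorphic_on UNIV"
      unfolding G_def by (intro holomorphic_intros)
    with False show ?thesis
      using holomorphic_countable_zeros[of G UNIV] by (simp add: connected_UNIV)
  qed
  moreover have "of_real ` {x. trig_poly \<Theta> A B x = 0} \<subseteq> {z. G z = 0}"
    by (auto simp: G)
  ultimately show ?thesis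
    by (metis countable_image_inj_on countable_subset inj_of_real inj_on_subset subset_UNIV)
qed

definition grid_shift :: "real \<Rightarrow> nat \<Rightarrow> (nat \<Rightarrow> nat) \<Rightarrow> (nat \<Rightarrow> nat) \<Rightarrow> real" where
  "grid_shift D m N n = (\<Sum>i<m. n i * D / N i)"

lemma cis_grid_shift:
  assumes "\<theta> * D = of_int u"
  shows "cis (2 * pi * \<theta> * (x + grid_shift D m N n)) = cis (2 * pi * \<theta> * x) * torus_char m N (\<lambda>i. u) n"
proof -
  have "2 * pi * \<theta> * (x + grid_shift D m N n) = 2 * pi * \<theta> * x + (\<Sum>i<m. 2 * pi * (\<theta> * D) * n i / N i)"
    by (simp add: grid_shift_def sum_distrib_left field_simps)
  then show ?thesis
    by (simp add: assms torus_char_const cis_mult)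
qed

lemma sum_trig_poly_torus_char_eq_0:
  assumes u: "\<forall>\<theta>\<in>\<Theta>. \<theta> * D = of_int (u \<theta>)"
    and nd: "\<forall>\<theta>\<in>\<Theta>. \<exists>i<m. 0 < N i \<and> \<not> int (N i) dvd (u \<theta> + r i) \<and> \<not> int (N i) dvd (u \<theta> - r i)"
  shows "(\<Sum>n\<in>residue_box m N. of_real (trig_poly \<Theta> A B (x + grid_shift D m N n)) * torus_char m N r n) = 0"
proof -
  define \<alpha> where "\<alpha> \<theta> = (of_real (A \<theta>) - \<i> * of_real (B \<theta>)) / 2 * cis (2 * pi * \<theta> * x)" for \<theta>
  define \<beta> where "\<beta> \<theta> = (of_real (A \<theta>) + \<i> * of_real (B \<theta>)) / 2 * cis (2 * pi * (- \<theta>) * x)" for \<theta>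
  have cos_sin_cis: "of_real (A \<theta> * cos (2 * pi * \<theta> * y) + B \<theta> * sin (2 * pi * \<theta> * y))
      = (of_real (A \<theta>) - \<i> * of_real (B \<theta>)) / 2 * cis (2 * pi * \<theta> * y)
      + (of_real (A \<theta>) + \<i> * of_real (B \<theta>)) / 2 * cis (2 * pi * (- \<theta>) * y)" for \<theta> y
    by (simp add: complex_eq_iff field_simps)
  have "(\<Sum>n\<in>residue_box m N. of_real (trig_poly \<Theta> A B (x + grid_shift D m N n)) * torus_char m N r n)
      = (\<Sum>n\<in>residue_box m N. \<Sum>\<theta>\<in>\<Theta>. \<alpha> \<theta> * torus_char m N (\<lambda>i. u \<theta> + r i) n
                                    + \<beta> \<theta> * torus_char m N (\<lambda>i. - u \<theta> + r i) n)"
    unfolding trig_poly_def of_real_sum sum_distrib_right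
  proof (intro sum.cong refl)
    fix n \<theta> assume "\<theta> \<in> \<Theta>"
    then have freq: "\<theta> * D = of_int (u \<theta>)" "(- \<theta>) * D = of_int (- u \<theta>)"
      using u by auto
    show "of_real (A \<theta> * cos (2 * pi * \<theta> * (x + grid_shift D m N n))
        + B \<theta> * sin (2 * pi * \<theta> * (x + grid_shift D m N n))) * torus_char m N r n
      = \<alpha> \<theta> * torus_char m N (\<lambda>i. u \<theta> + r i) n + \<beta> \<theta> * torus_char m N (\<lambda>i. - u \<theta> + r i) n"
      unfolding cos_sin_cis cis_grid_shift[OF freq(1)] cis_grid_shift[OF freq(2)] torus_char_add
      by (simp add: \<alpha>_def \<beta>_def algebra_simps)
  qed
  also have "\<dots> = (\<Sum>\<theta>\<in>\<Theta>. \<alpha> \<theta> * (\<Sum>n\<in>residue_box m N. torus_char m N (\<lambda>i. u \<theta> + r i) n)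
                        + \<beta> \<theta> * (\<Sum>n\<in>residue_box m N. torus_char m N (\<lambda>i. - u \<theta> + r i) n))"
    by (subst sum.swap) (simp add: sum.distrib sum_distrib_left)
  also have "\<dots> = 0"
  proof (intro sum.neutral ballI)
    fix \<theta> assume "\<theta> \<in> \<Theta>"
    then obtain i where "i < m" "0 < N i" "\<not> int (N i) dvd (u \<theta> + r i)" "\<not> int (N i) dvd (- u \<theta> + r i)"
      using nd by (metis dvd_minus_iff minus_diff_eq uminus_add_conv_diff)
    then show "\<alpha> \<theta> * (\<Sum>n\<in>residue_box m N. torus_char m N (\<lambda>i. u \<theta> + r i) n)
             + \<beta> \<theta> * (\<Sum>n\<in>residue_box m N. torus_char m N (\<lambda>i. - u \<theta> + r i) n) = 0"
      by (simp add: sum_torus_char_eq_0)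
  qed
  finally show ?thesis .
qed

lemma window_not_dvd:
  fixes u r :: int and d N :: nat
  assumes "d \<le> u" "u + d \<le> N" "\<bar>r\<bar> < d"
  shows "\<not> int N dvd (u + r)" "\<not> int N dvd (u - r)"
proof -
  have "0 < u + r" "u + r < N" "0 < u - r" "u - r < N"
    using assms unfolding abs_less_iff by linarith+
  then show "\<not> int N dvd (u + r)" "\<not> int N dvd (u - r)"
    by (simp_all add: zdvd_not_zless)
qed

lemma card_positive_grid_shifts_ge:
  assumes u: "\<forall>\<theta>\<in>\<Theta>. \<theta> * D = of_int (u \<theta>)"
    and dN: "\<forall>i<m. 0 < d i \<and> d i \<le> N i"
    and window: "\<forall>\<theta>\<in>\<Theta>. \<exists>i<m. d i \<le> u \<theta> \<and> u \<theta> + d i \<le> N i"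
    and nz: "\<forall>n\<in>residue_box m N. trig_poly \<Theta> A B (x + grid_shift D m N n) \<noteq> 0"
  shows "(\<Prod>i<m. d i) \<le> card {n\<in>residue_box m N. trig_poly \<Theta> A B (x + grid_shift D m N n) > 0}"
proof -
  let ?g = "\<lambda>n. trig_poly \<Theta> A B (x + grid_shift D m N n)"
  let ?\<chi> = "\<lambda>k. torus_char m N (\<lambda>i. int (k i))"
  have dN': "\<forall>i<m. 0 < N i \<and> d i \<le> N i"
    using dN by fastforce
  have "card (residue_box m d) \<le> card {n\<in>residue_box m N. ?g n > 0}"
  proof (rule card_positive_ge_of_orthogonal[where E = ?\<chi>])
    show "\<forall>k\<in>residue_box m d. c k = 0"
      if "\<forall>n\<in>residue_box m N. (\<Sum>k\<in>residue_box m d. c k * ?\<chi> k n) = 0" for c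
      using torus_chars_independent[OF dN' that] .
    show "(\<Sum>n\<in>residue_box m N. of_real (?g n) * ?\<chi> k n * cnj (?\<chi> l n)) = 0"
      if k: "k \<in> residue_box m d" and l: "l \<in> residue_box m d" for k l
    proof -
      define r where "r i = int (k i) - int (l i)" for i
      have "\<exists>i<m. 0 < N i \<and> \<not> int (N i) dvd (u \<theta> + r i) \<and> \<not> int (N i) dvd (u \<theta> - r i)"
        if "\<theta> \<in> \<Theta>" for \<theta>
      proof -
        obtain i where i: "i < m" "d i \<le> u \<theta>" "u \<theta> + d i \<le> N i"
          using window \<open>\<theta> \<in> \<Theta>\<close> by blast
        have "k i < d i" "l i < d i"
          using k l i(1) by (auto simp: residue_box_def)
        then have "\<bar>r i\<bar> < d i"
          unfolding r_def by linarith
        then show ?thesis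
          using i dN' window_not_dvd[OF i(2,3)] by blast
      qed
      then show ?thesis
        using sum_trig_poly_torus_char_eq_0[OF u] by (simp add: mult.assoc torus_char_mult_cnj r_def)
    qed
  qed (use nz in auto)
  then show ?thesis
    by (simp add: card_residue_box)
qed

section \<open>Averaging over a period\<close>

lemma periodic_add_of_int_mult:
  fixes h :: "real \<Rightarrow> 'a"
  assumes "\<And>x. h (x + P) = h x"
  shows "h (x + of_int k * P) = h x"
proof -
  have nat: "h (y + real n * P) = h y" for y n
    by (induction n) (simp_all add: algebra_simps assms[of "y + real _ * P", simplified algebra_simps])
  show ?thesis
  proof (cases "k \<ge> 0")
    case True
    then show ?thesis
      using nat[of x "nat k"] by simp
  next
    case False
    then show ?thesis
      using nat[of "x + of_int k * P" "nat (- k)"] by (simp add: algebra_simps)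
  qed
qed

lemma integral_periodic_shift:
  fixes h :: "real \<Rightarrow> real"
  assumes P: "0 < P" and per: "\<And>x. h (x + P) = h x" and int: "\<And>a b. h integrable_on {a..b}"
  shows "integral {t..t + P} h = integral {0..P} h"
proof -
  define k where "k = \<lfloor>t / P\<rfloor>"
  define r where "r = t - of_int k * P"
  have r: "0 \<le> r" "r \<le> P"
    using P floor_divide_lower[OF P, of t] floor_divide_upper[OF P, of t]
    by (auto simp: r_def k_def algebra_simps)
  have "integral {t..t + P} h = integral {r..r + P} (h \<circ> (+) (of_int k * P))"
    by (simp add: integral_shift_Icc_real r_def)
  also have "h \<circ> (+) (of_int k * P) = h"
    using periodic_add_of_int_mult[where h = h and P = P, OF per] by (auto simp: add.commute)
  also have "integral {r..r + P} h = integral {r..P} h + integral {P..P + r} h"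
    using Henstock_Kurzweil_Integration.integral_combine[where a = r and c = P and b = "r + P" and f = h] r int
    by (simp add: add.commute)
  also have "integral {P..P + r} h = integral {0..r} (h \<circ> (+) P)"
    by (simp add: integral_shift_Icc_real add.commute)
  also have "h \<circ> (+) P = h"
    using per by (auto simp: add.commute)
  also have "integral {r..P} h + integral {0..r} h = integral {0..P} h"
    using Henstock_Kurzweil_Integration.integral_combine[where a = 0 and c = r and b = P and f = h] r int
    by simp
  finally show ?thesis .
qed

lemma has_integral_indicator_Icc:
  assumes "S \<in> sets lebesgue"
  shows "(indicator S has_integral measure lebesgue (S \<inter> {a..b})) {a..b :: real}"
proof -
  have "{a..b} \<inter> S \<in> lmeasurable"
    using assms by (intro fmeasurable_Int_fmeasurable) auto
  then have "S \<inter> {a..b} \<in> lmeasurable"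
    by (simp add: Int_commute)
  then have "(indicator (S \<inter> {a..b}) has_integral measure lebesgue (S \<inter> {a..b})) UNIV"
    using lmeasurable_iff_has_integral by blast
  moreover have "indicator (S \<inter> {a..b}) = (\<lambda>x. if x \<in> {a..b} then indicator S x else (0::real))"
    by (auto simp: indicator_def)
  ultimately show ?thesis
    using has_integral_restrict_UNIV by metis
qed

lemma lebesgue_sets_translation_vimage:
  fixes S :: "real set"
  assumes "S \<in> sets lebesgue"
  shows "{x. x + t \<in> S} \<in> sets lebesgue"
proof -
  have "{x. x + t \<in> S} = (+) (- t) ` S"
    by (force simp: image_iff)
  then show ?thesis
    using lebesgue_sets_translation[OF assms, of "- t"] by metis
qed

lemma measure_periodic_set_shift:
  fixes S :: "real set"
  assumes P: "0 < P" and S: "S \<in> sets lebesgue" and per: "\<And>x. x + P \<in> S \<longleftrightarrow> x \<in> S"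
  shows "measure lebesgue {x\<in>{0..P}. x + t \<in> S} = measure lebesgue (S \<inter> {0..P})"
proof -
  define h :: "real \<Rightarrow> real" where "h = indicator S"
  have h_int: "(h has_integral measure lebesgue (S \<inter> {a..b})) {a..b}" for a b
    unfolding h_def by (rule has_integral_indicator_Icc[OF S])
  have "measure lebesgue {x\<in>{0..P}. x + t \<in> S} = integral {0..P} (indicator {x. x + t \<in> S})"
    using has_integral_indicator_Icc[OF lebesgue_sets_translation_vimage[OF S, of t], of 0 P]
    by (simp add: integral_unique Int_def conj_commute)
  also have "indicator {x. x + t \<in> S} = h \<circ> (+) t"
    by (auto simp: h_def indicator_def add.commute)
  also have "integral {0..P} (h \<circ> (+) t) = integral {t..t + P} h"
    by (simp add: integral_shift_Icc_real add.commute)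
  also have "\<dots> = integral {0..P} h"
    using h_int per by (intro integral_periodic_shift[OF P]) (auto simp: h_def indicator_def)
  also have "\<dots> = measure lebesgue (S \<inter> {0..P})"
    using h_int by (rule integral_unique)
  finally show ?thesis .
qed

lemma measure_periodic_set_ge_of_shift_count:
  fixes S :: "real set"
  assumes P: "0 < P" and S: "S \<in> sets lebesgue" and per: "\<And>x. x + P \<in> S \<longleftrightarrow> x \<in> S"
    and T: "finite T" and Z: "negligible Z"
    and count: "\<And>x. x \<notin> Z \<Longrightarrow> c \<le> card {j\<in>T. x + t j \<in> S}"
  shows "real c * P \<le> real (card T) * measure lebesgue (S \<inter> {0..P})"
proof -
  \<comment> \<open>Integrate \<open>x \<mapsto> #{j \<in> T. x + t j \<in> S}\<close> over one period.\<close>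
  define f where "f x = (\<Sum>j\<in>T. indicator {y. y + t j \<in> S} x :: real)" for x
  have St: "{y. y + t j \<in> S} \<in> sets lebesgue" for j
    using lebesgue_sets_translation_vimage[OF S] .
  have f_int: "(f has_integral (\<Sum>j\<in>T. measure lebesgue ({y. y + t j \<in> S} \<inter> {0..P}))) {0..P}"
    unfolding f_def using has_integral_indicator_Icc[OF St] by (intro has_integral_sum[OF T])
  have f_card: "f x = card {j\<in>T. x + t j \<in> S}" for x
    using T by (simp add: f_def indicator_def sum.If_cases Int_def)
  have spike: "((\<lambda>x. if x \<in> Z then real c else f x) has_integral
      (\<Sum>j\<in>T. measure lebesgue ({y. y + t j \<in> S} \<inter> {0..P}))) {0..P}"
    by (rule has_integral_spike[OF Z _ f_int]) auto
  have const: "((\<lambda>x. real c) has_integral real c * P) {0..P}"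
    using has_integral_const_real[of "real c" 0 P] P by (simp add: mult.commute)
  have "real c * P \<le> (\<Sum>j\<in>T. measure lebesgue ({y. y + t j \<in> S} \<inter> {0..P}))"
    by (rule has_integral_le[OF const spike]) (simp add: f_card count)
  also have "\<dots> = real (card T) * measure lebesgue (S \<inter> {0..P})"
    using measure_periodic_set_shift[OF P S per] by (simp add: Int_def conj_commute)
  finally show ?thesis .
qed

section \<open>Choice of the grid\<close>

lemma Rats_common_denominator:
  assumes "finite \<Theta>" "\<Theta> \<subseteq> \<rat>"
  obtains D :: nat where "0 < D" "\<forall>\<theta>\<in>\<Theta>. \<theta> * D \<in> \<int>"
  using assms
proof (induction \<Theta> arbitrary: thesis rule: finite_induct)
  case empty
  then show ?case
    by (metis empty_iff zero_less_one)
next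
  case (insert \<theta> \<Theta>)
  then obtain D :: nat where D: "0 < D" "\<forall>\<phi>\<in>\<Theta>. \<phi> * D \<in> \<int>"
    by auto
  obtain p q :: int where pq: "0 < q" "\<theta> = p / q"
    using insert.prems(2) by (auto elim: Rats_cases')
  have "\<theta> * (D * nat q) = of_int (p * int D)"
    using pq by (simp add: field_simps)
  then have "\<theta> * (D * nat q) \<in> \<int>"
    by (metis Ints_of_int)
  moreover have "\<phi> * (D * nat q) \<in> \<int>" if "\<phi> \<in> \<Theta>" for \<phi>
    using D(2) that pq(1) by (metis Ints_mult Ints_of_int mult.assoc of_nat_mult of_int_of_nat_eq nat_0_le less_imp_le)
  ultimately show ?case
    using insert.prems(1)[of "D * nat q"] D(1) pq(1) by simp
qed

lemma exists_residue_window: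
  fixes U :: "int set" and \<alpha> \<beta> :: real
  assumes "finite U" "0 < \<alpha>" "\<alpha> \<le> \<beta>" "\<forall>v\<in>U. \<alpha> \<le> v \<and> v \<le> \<beta>"
  obtains d N :: nat where "0 < d" "d \<le> N" "1 / (1 + \<beta> / \<alpha>) \<le> d / N" "\<forall>v\<in>U. d \<le> v \<and> v + d \<le> N"
proof (cases "U = {}")
  case True
  have "0 < \<beta> / \<alpha>"
    using assms(2,3) by simp
  then show ?thesis
    by (intro that[of 1 1]) (auto simp: True)
next
  case False
  define lo where "lo = Min U"
  define hi where "hi = Max U"
  have U: "lo \<in> U" "hi \<in> U" "\<forall>v\<in>U. lo \<le> v \<and> v \<le> hi"
    using assms(1) False by (auto simp: lo_def hi_def)
  then have bounds: "\<alpha> \<le> lo" "hi \<le> \<beta>" "0 < lo" "0 < hi"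
    using assms(2,4) by fastforce+
  have "\<alpha> * (lo + hi) \<le> lo * (\<alpha> + \<beta>)"
    using bounds mult_mono[of \<alpha> lo hi \<beta>] by (simp add: algebra_simps)
  then have "1 / (1 + \<beta> / \<alpha>) \<le> lo / (lo + hi)"
    using bounds assms(2) by (simp add: field_simps)
  moreover have "\<forall>v\<in>U. lo \<le> v \<and> v + lo \<le> lo + hi"
    using U by auto
  ultimately show ?thesis
    using bounds by (intro that[of "nat lo" "nat (lo + hi)"]) auto
qed

lemma exists_residue_windows:
  fixes \<Theta> :: "real set" and a b :: "nat \<Rightarrow> real" and u :: "real \<Rightarrow> int"
  assumes fin: "finite \<Theta>" and D: "0 < D" and u: "\<forall>\<theta>\<in>\<Theta>. \<theta> * D = of_int (u \<theta>)"
    and ab: "\<forall>i<m. 0 < a i \<and> a i \<le> b i" and cover: "\<Theta> \<subseteq> (\<Union>i<m. {a i..b i})"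
  obtains d N :: "nat \<Rightarrow> nat" where "\<forall>i<m. 0 < d i \<and> d i \<le> N i"
    and "(\<Prod>i<m. 1 / (1 + b i / a i)) \<le> (\<Prod>i<m. real (d i) / real (N i))"
    and "\<forall>\<theta>\<in>\<Theta>. \<exists>i<m. d i \<le> u \<theta> \<and> u \<theta> + d i \<le> N i"
proof -
  define admissible where "admissible i p \<longleftrightarrow> 0 < fst p \<and> fst p \<le> snd p
      \<and> 1 / (1 + b i / a i) \<le> real (fst p) / real (snd p)
      \<and> (\<forall>\<theta>\<in>\<Theta>. a i \<le> \<theta> \<and> \<theta> \<le> b i \<longrightarrow> fst p \<le> u \<theta> \<and> u \<theta> + fst p \<le> snd p)"
    for i and p :: "nat \<times> nat"
  have "\<exists>p. admissible i p" if "i \<in> {..<m}" for i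
  proof -
    let ?U = "u ` {\<theta>\<in>\<Theta>. a i \<le> \<theta> \<and> \<theta> \<le> b i}"
    have "finite ?U" "0 < a i * D" "a i * D \<le> b i * D"
      using fin ab that D by auto
    moreover have "\<forall>v\<in>?U. a i * D \<le> v \<and> v \<le> b i * D"
      using u D by (auto simp flip: u intro: mult_right_mono)
    ultimately obtain di Ni :: nat where "0 < di" "di \<le> Ni" "1 / (1 + b i * D / (a i * D)) \<le> di / Ni"
        "\<forall>v\<in>?U. di \<le> v \<and> v + di \<le> Ni"
      by (rule exists_residue_window)
    then show ?thesis
      using D by (intro exI[of _ "(di, Ni)"]) (auto simp: admissible_def)
  qed
  then obtain p where p: "\<forall>i\<in>{..<m}. admissible i (p i)"
    by (metis bchoice)
  show thesis
  proof (rule that[of "fst \<circ> p" "snd \<circ> p"])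
    show "\<forall>i<m. 0 < (fst \<circ> p) i \<and> (fst \<circ> p) i \<le> (snd \<circ> p) i"
      using p by (simp add: admissible_def)
    show "(\<Prod>i<m. 1 / (1 + b i / a i)) \<le> (\<Prod>i<m. real ((fst \<circ> p) i) / real ((snd \<circ> p) i))"
      using p ab by (intro prod_mono) (auto simp: admissible_def add_pos_pos less_imp_le)
    show "\<forall>\<theta>\<in>\<Theta>. \<exists>i<m. (fst \<circ> p) i \<le> u \<theta> \<and> u \<theta> + (fst \<circ> p) i \<le> (snd \<circ> p) i"
      using cover p by (fastforce simp: admissible_def)
  qed
qed

lemma trig_poly_positive_measure_ge_grid_ratio:
  fixes \<Theta> :: "real set" and D :: real and u :: "real \<Rightarrow> int" and m :: nat and d N :: "nat \<Rightarrow> nat"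
  assumes u: "\<forall>\<theta>\<in>\<Theta>. \<theta> * D = of_int (u \<theta>)" and dN: "\<forall>i<m. 0 < d i \<and> d i \<le> N i"
    and window: "\<forall>\<theta>\<in>\<Theta>. \<exists>i<m. d i \<le> u \<theta> \<and> u \<theta> + d i \<le> N i"
    and nz: "trig_poly \<Theta> A B x0 \<noteq> 0" and P: "is_period (trig_poly \<Theta> A B) P"
  shows "(\<Prod>i<m. real (d i) / real (N i)) * P \<le> measure lebesgue {x\<in>{0..P}. trig_poly \<Theta> A B x > 0}"
proof -
  define F where "F = trig_poly \<Theta> A B"
  define Z where "Z = (\<Union>n\<in>residue_box m N. (\<lambda>z. z - grid_shift D m N n) ` {x. F x = 0})"
  have "countable Z"
    unfolding Z_def F_def using countable_trig_poly_zeros[OF nz]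
    by (intro countable_UN[OF countable_finite[OF finite_residue_box]] countable_image)
  have P_pos: "0 < P" and P_per: "\<And>x. F (x + P) = F x"
    using P by (auto simp: is_period_def F_def)
  have count: "real (\<Prod>i<m. d i) * P \<le> real (card (residue_box m N)) * measure lebesgue ({x. F x > 0} \<inter> {0..P})"
  proof (rule measure_periodic_set_ge_of_shift_count[where t = "grid_shift D m N"])
    have "open {x. F x > 0}"
      unfolding F_def by (intro open_Collect_less continuous_on_const continuous_on_trig_poly)
    then show "{x. F x > 0} \<in> sets lebesgue"
      by (simp add: borel_open)
    show "negligible Z"
      using \<open>countable Z\<close>
      by (simp add: negligible_iff_null_sets countable_imp_null_set_lborel null_sets_completionI)
    show "(\<Prod>i<m. d i) \<le> card {n\<in>residue_box m N. x + grid_shift D m N n \<in> {x. F x > 0}}"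
      if "x \<notin> Z" for x
    proof -
      have "F (x + grid_shift D m N n) \<noteq> 0" if "n \<in> residue_box m N" for n
      proof
        assume "F (x + grid_shift D m N n) = 0"
        then have "x \<in> Z"
          unfolding Z_def using that by (intro UN_I image_eqI[of _ _ "x + grid_shift D m N n"]) auto
        with \<open>x \<notin> Z\<close> show False
          by blast
      qed
      then show ?thesis
        using card_positive_grid_shifts_ge[OF u dN window] by (simp add: F_def)
    qed
  qed (use P_pos P_per in auto)
  have "(\<Prod>i<m. real (d i) / real (N i)) * P = real (\<Prod>i<m. d i) * P / real (\<Prod>i<m. N i)"
    by (simp add: prod_dividef)
  also have "\<dots> \<le> measure lebesgue ({x. F x > 0} \<inter> {0..P})"
  proof -
    have "0 < (\<Prod>i<m. real (N i))"
      using dN by (intro prod_pos) (auto intro: less_le_trans)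
    then show ?thesis
      using count by (simp add: card_residue_box divide_le_eq mult.commute)
  qed
  finally show ?thesis
    by (simp add: F_def Int_def conj_commute)
qed

lemma trig_poly_positive_measure_ge:
  fixes \<Theta> :: "real set" and a b :: "nat \<Rightarrow> real"
  assumes fin: "finite \<Theta>" and rat: "\<Theta> \<subseteq> \<rat>"
    and ab: "\<forall>i<m. 0 < a i \<and> a i \<le> b i" and cover: "\<Theta> \<subseteq> (\<Union>i<m. {a i..b i})"
    and nz: "trig_poly \<Theta> A B x0 \<noteq> 0" and P: "is_period (trig_poly \<Theta> A B) P"
  shows "(\<Prod>i<m. 1 / (1 + b i / a i)) * P \<le> measure lebesgue {x\<in>{0..P}. trig_poly \<Theta> A B x > 0}"
proof -
  obtain D :: nat where D: "0 < D" "\<forall>\<theta>\<in>\<Theta>. \<theta> * D \<in> \<int>"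
    using Rats_common_denominator[OF fin rat] by blast
  define u where "u \<theta> = \<lfloor>\<theta> * D\<rfloor>" for \<theta> :: real
  have u: "\<forall>\<theta>\<in>\<Theta>. \<theta> * D = of_int (u \<theta>)"
    using D(2) by (auto simp: u_def elim!: Ints_cases)
  obtain d N where dN: "\<forall>i<m. 0 < d i \<and> d i \<le> N i"
    and ratio: "(\<Prod>i<m. 1 / (1 + b i / a i)) \<le> (\<Prod>i<m. real (d i) / real (N i))"
    and window: "\<forall>\<theta>\<in>\<Theta>. \<exists>i<m. d i \<le> u \<theta> \<and> u \<theta> + d i \<le> N i"
    using exists_residue_windows[OF fin _ u ab cover] D(1) by auto
  have "(\<Prod>i<m. 1 / (1 + b i / a i)) * P \<le> (\<Prod>i<m. real (d i) / real (N i)) * P"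
    using ratio P by (intro mult_right_mono) (auto simp: is_period_def)
  also have "\<dots> \<le> measure lebesgue {x\<in>{0..P}. trig_poly \<Theta> A B x > 0}"
    by (rule trig_poly_positive_measure_ge_grid_ratio[OF u dN window nz P])
  finally show ?thesis .
qed

theorem theorem3:
  fixes \<Theta> :: "real set" and m :: nat and a b :: "nat \<Rightarrow> real"
    and A B :: "real \<Rightarrow> real" and F :: "real \<Rightarrow> real"
  assumes "finite \<Theta>" and "\<Theta> \<subseteq> \<rat>" and "\<forall>\<theta>\<in>\<Theta>. \<theta> > 0"
    and "\<forall>i<m. 0 < a i \<and> a i \<le> b i"
    and "\<Theta> \<subseteq> (\<Union>i<m. {a i..b i})"
    and "\<And>x. F x = (\<Sum>\<theta>\<in>\<Theta>. A \<theta> * cos (2 * pi * \<theta> * x) + B \<theta> * sin (2 * pi * \<theta> * x))"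
    and "\<exists>x. F x \<noteq> 0"
  shows "min (rho_plus F) (rho_minus F) \<ge> (\<Prod>i<m. 1 / (1 + b i / a i))"
proof -
  let ?c = "\<Prod>i<m. 1 / (1 + b i / a i)"
  have F: "F = trig_poly \<Theta> A B"
    using assms(6) by (simp add: fun_eq_iff trig_poly_def)
  then have F_neg: "(\<lambda>x. - F x) = trig_poly \<Theta> (\<lambda>\<theta>. - A \<theta>) (\<lambda>\<theta>. - B \<theta>)"
    by (simp add: fun_eq_iff uminus_trig_poly)
  obtain x0 where x0: "F x0 \<noteq> 0"
    using assms(7) by blast
  obtain D :: nat where "0 < D" "\<forall>\<theta>\<in>\<Theta>. \<theta> * D \<in> \<int>"
    using Rats_common_denominator[OF assms(1,2)] by blast
  then have "is_period F D"
    by (simp add: is_period_def F trig_poly_periodic)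
  then have P: "is_period F (some_period F)"
    unfolding some_period_def by (rule someI)
  then have P_neg: "is_period (\<lambda>x. - F x) (some_period F)"
    by (simp add: is_period_def)
  have "?c * some_period F \<le> measure lebesgue {x\<in>{0..some_period F}. F x > 0}"
    using trig_poly_positive_measure_ge[OF assms(1,2,4,5)] x0 P by (simp add: F)
  moreover have "?c * some_period F \<le> measure lebesgue {x\<in>{0..some_period F}. - F x > 0}"
    using trig_poly_positive_measure_ge[OF assms(1,2,4,5), of "\<lambda>\<theta>. - A \<theta>" "\<lambda>\<theta>. - B \<theta>", folded F_neg] x0 P_neg
    by simp
  ultimately show ?thesis
    using P by (simp add: rho_plus_def rho_minus_def is_period_def le_divide_eq)
qed

end
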